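(* In the setting of the context, suppose Condition UI holds: $\mathcal{Q}$ is uniformly integrable and each $R^i\mathcal{Q}:=\{R^iZ:Z\in\mathcal{Q}\}$, $i=1,\dots,d$, is uniformly integrable. Let $\overline{\mathcal{Q}}$ be the $L^1$-closure of $\mathcal{Q}$. Then $C_{\overline{\mathcal{Q}}}:=\{\mathbb{E}[-Z(R-r\mathbf{1})]:Z\in\overline{\mathcal{Q}}\}$ is a convex and compact subset of $\mathbb{R}^d$, and for every $\pi\in\mathbb{R}^d$, $\rho(X_\pi)=\max_{c\in C_{\overline{\mathcal{Q}}}}\pi\cdot c$.
   Context: Let $(\Omega,\mathcal{F},\mathbb{P})$ be a probability space and a market: riskless asset $S^0_0=1$, $S^0_1=1+r$, $r>-1$; risky assets $S^1,\dots,S^d$ with constants $S^i_0>0$ and real-valued $\mathcal{F}$-measurable $S^i_1$; returns $R^i:=(S^i_1-S^i_0)/S^i_0$, $R=(R^1,\dots,R^d)$. Standing assumptions: nonredundancy (if $\theta\in\mathbb{R}^{1+d}$ with $\sum_{i=0}^d\theta^iS^i_t=0$ a.s. for $t\in\{0,1\}$ then $\theta=0$), $R^i\in L^1$, $\mathbb{E}[R^i]\ne r$ for some $i$. Excess return: $X_\pi:=\pi\cdot(R-r\mathbf{1})$. $L$ is a Riesz space with $L^\infty\subset L\subset L^1$ containing all $X_\pi$. $\mathcal{D}:=\{Z\in L^1:Z\ge0,\mathbb{E}[Z]=1\}$; $\mathcal{Q}\subset\mathcal{D}$ is convex with $1\in\mathcal{Q}$ and $\rho(X)=\sup_{Z\in\mathcal{Q}}\mathbb{E}[-ZX]$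 on $L$, where $\mathbb{E}[-ZX]:=\mathbb{E}[ZX^-]-\mathbb{E}[ZX^+]$ with $\mathbb{E}[-ZX]=\infty$ if $\mathbb{E}[ZX^-]=\infty$. *)

theory Defs
  imports "HOL-Probability.Probability"
begin

definition unif_integrable :: "'a measure \<Rightarrow> ('a \<Rightarrow> real) set \<Rightarrow> bool" where
  "unif_integrable M F \<longleftrightarrow>
     F \<subseteq> borel_measurable M \<and>
     ((\<lambda>K::real. \<Squnion>f\<in>F. \<integral>\<^sup>+x. ennreal \<bar>f x\<bar> * indicator {y. K < \<bar>f y\<bar>} x \<partial>M)
        \<longlongrightarrow> 0) at_top"

definition densities :: "'a measure \<Rightarrow> ('a \<Rightarrow> real) set" where
  "densities M = {Z. integrable M Z \<and> (AE x in M. 0 \<le> Z x) \<and> integral\<^sup>L M Z = 1}"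

definition L1_closure :: "'a measure \<Rightarrow> ('a \<Rightarrow> real) set \<Rightarrow> ('a \<Rightarrow> real) set" where
  "L1_closure M Q = {Z. integrable M Z \<and>
      (\<exists>Zn. (\<forall>n. Zn n \<in> Q) \<and>
         (\<lambda>n. \<integral>\<^sup>+x. ennreal \<bar>Zn n x - Z x\<bar> \<partial>M) \<longlonglongrightarrow> 0)}"

definition neg_expect :: "'a measure \<Rightarrow> ('a \<Rightarrow> real) \<Rightarrow> ('a \<Rightarrow> real) \<Rightarrow> ereal" where
  "neg_expect M Z X =
     (let a = (\<integral>\<^sup>+x. ennreal (Z x * max 0 (- X x)) \<partial>M);
          b = (\<integral>\<^sup>+x. ennreal (Z x * max 0 (X x)) \<partial>M)
      in if a = \<infinity> then \<infinity> else enn2ereal a - enn2ereal b)"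

definition rho :: "'a measure \<Rightarrow> ('a \<Rightarrow> real) set \<Rightarrow> ('a \<Rightarrow> real) \<Rightarrow> ereal" where
  "rho M Q X = (\<Squnion>Z\<in>Q. neg_expect M Z X)"

definition excess_return :: "('d::finite \<Rightarrow> 'a \<Rightarrow> real) \<Rightarrow> real \<Rightarrow> real^'d \<Rightarrow> 'a \<Rightarrow> real" where
  "excess_return R r \<pi> = (\<lambda>x. \<Sum>i\<in>UNIV. \<pi> $ i * (R i x - r))"

definition C_set :: "'a measure \<Rightarrow> ('d::finite \<Rightarrow> 'a \<Rightarrow> real) \<Rightarrow> real \<Rightarrow> ('a \<Rightarrow> real) set \<Rightarrow> (real^'d) set" where
  "C_set M R r Q = {c. \<exists>Z\<in>Q. \<forall>i. ereal (c $ i) = neg_expect M Z (\<lambda>x. R i x - r)}"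

end

theory Submission
  imports Defs
begin

text \<open>
  For a density \<open>Z\<close> write \<open>T Z = E[-Z (R - r 1)]\<close>.  Then \<open>\<rho>(X\<^sub>\<pi>)\<close> is the supremum of
  \<open>\<pi> \<bullet> T Z\<close> over \<open>Z \<in> Q\<close>, and \<open>C\<close> of the \<open>L\<^sup>1\<close>-closure \<open>cl Q\<close> is \<open>T(cl Q)\<close>.  Everything
  follows once \<open>T(cl Q)\<close> is shown to be the closure of the bounded convex set \<open>T(Q)\<close>:
  a linear functional attains its supremum over \<open>T(Q)\<close> on that compact closure.

  Uniform integrability of the families \<open>R\<^sup>i Q\<close> makes \<open>T\<close> continuous along \<open>L\<^sup>1\<close>-convergent
  sequences from \<open>Q\<close>, which gives \<open>T(cl Q) \<subseteq> closure T(Q)\<close>.  The converse avoids weak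
  compactness (Dunford-Pettis): for \<open>c\<close> in the closure of \<open>T(Q)\<close> take \<open>Z\<^sub>n\<close> almost
  maximising \<open>E[\<surd>Z]\<close> over the convex sets \<open>{Z \<in> Q. |T Z - c| \<le> 1/(n+1)}\<close>.  The midpoint
  of \<open>Z\<^sub>n\<close> and \<open>Z\<^sub>m\<close> competes with \<open>Z\<^sub>n\<close>, so the concavity defect
  \<open>E[\<surd>((Z\<^sub>n + Z\<^sub>m)/2) - (\<surd>Z\<^sub>n + \<surd>Z\<^sub>m)/2]\<close> tends to \<open>0\<close>; a pointwise inequality
  together with uniform integrability of \<open>Q\<close> turns this into \<open>E|Z\<^sub>n - Z\<^sub>m| \<rightarrow> 0\<close>, and the
  \<open>L\<^sup>1\<close>-limit \<open>Z\<close> satisfies \<open>T Z = c\<close>.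
\<close>

section \<open>Concavity of the square root\<close>

lemma sqrt_midpoint_ge:
  fixes g h :: real
  assumes "0 \<le> g" "0 \<le> h"
  shows "(sqrt g + sqrt h) / 2 \<le> sqrt ((g + h) / 2)"
proof (rule real_le_rsqrt)
  have "0 \<le> (sqrt g - sqrt h)\<^sup>2" by simp
  then show "((sqrt g + sqrt h) / 2)\<^sup>2 \<le> (g + h) / 2"
    using assms by (simp add: power2_eq_square algebra_simps)
qed

lemma abs_diff_le_sqrt_midpoint_defect:
  fixes g h t :: real
  assumes g: "0 \<le> g" and h: "0 \<le> h" and t: "0 < t"
  shows "\<bar>g - h\<bar> \<le> 3 * t * (sqrt ((g + h) / 2) - (sqrt g + sqrt h) / 2) + (sqrt g + sqrt h) ^ 3 / (2 * t)"
proof -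
  define u v where "u = sqrt g" and "v = sqrt h"
  define s w where "s = u + v" and "w = sqrt ((g + h) / 2)"
  define D where "D = w - s / 2"
  have uv: "0 \<le> u" "0 \<le> v" "g = u\<^sup>2" "h = v\<^sup>2"
    using g h by (simp_all add: u_def v_def)
  have D_nonneg: "0 \<le> D"
    using sqrt_midpoint_ge[OF g h] by (simp add: D_def s_def w_def u_def v_def)
  have "w \<le> sqrt (s\<^sup>2)"
    unfolding w_def using uv by (intro real_sqrt_le_mono) (simp add: s_def power2_eq_square algebra_simps)
  then have w_le: "w \<le> s" using uv by (simp add: s_def)
  have "w\<^sup>2 = (u\<^sup>2 + v\<^sup>2) / 2"
    using uv g h by (simp add: w_def)
  then have "(u - v)\<^sup>2 = 4 * D * (w + s / 2)"
    by (simp add: D_def s_def power2_eq_square field_simps)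
  also have "\<dots> \<le> 4 * D * (3 / 2 * s)"
    using D_nonneg w_le by (intro mult_left_mono) auto
  finally have uv_diff: "(u - v)\<^sup>2 \<le> 6 * s * D" by (simp add: ac_simps)
  have "g - h = (u - v) * s"
    using uv by (simp add: s_def power2_eq_square algebra_simps)
  then have diff_eq: "\<bar>g - h\<bar> = \<bar>u - v\<bar> * s"
    using uv(1,2) by (simp add: abs_mult s_def)
  \<comment> \<open>AM-GM: \<open>6 s\<^sup>3 D = 4 ab \<le> (a + b)\<^sup>2\<close> for \<open>a = 3 t D\<close>, \<open>b = s\<^sup>3 / (2 t)\<close>\<close>
  have "\<bar>g - h\<bar>\<^sup>2 = (u - v)\<^sup>2 * s\<^sup>2"
    by (simp add: diff_eq power_mult_distrib)
  also have "\<dots> \<le> (6 * s * D) * s\<^sup>2"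
    using uv_diff by (rule mult_right_mono) simp
  also have "\<dots> = 6 * s ^ 3 * D"
    by (simp add: power2_eq_square power3_eq_cube)
  also have "\<dots> \<le> (3 * t * D + s ^ 3 / (2 * t))\<^sup>2"
  proof -
    have "(3 * t * D + s ^ 3 / (2 * t))\<^sup>2 - 6 * s ^ 3 * D = (3 * t * D - s ^ 3 / (2 * t))\<^sup>2"
      using t by (simp add: power2_eq_square field_simps)
    then show ?thesis by (smt (verit) zero_le_power2)
  qed
  finally have "\<bar>g - h\<bar>\<^sup>2 \<le> (3 * t * D + s ^ 3 / (2 * t))\<^sup>2" .
  moreover have "0 \<le> 3 * t * D + s ^ 3 / (2 * t)"
    using t D_nonneg uv(1,2) by (simp add: s_def)
  ultimately have "\<bar>g - h\<bar> \<le> 3 * t * D + s ^ 3 / (2 * t)"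
    by (rule power2_le_imp_le)
  then show ?thesis by (simp add: D_def w_def s_def u_def v_def)
qed

lemma abs_diff_le_sqrt_midpoint_defect_truncated:
  fixes g h t a :: real
  assumes g: "0 \<le> g" and h: "0 \<le> h" and t: "0 < t" and a: "0 \<le> a"
  shows "\<bar>g - h\<bar> \<le> 3 * t * (sqrt ((g + h) / 2) - (sqrt g + sqrt h) / 2) + 4 * sqrt (2 * a) ^ 3 / t
           + 2 * max 0 (g - a) + 2 * max 0 (h - a)"
proof (cases "g \<le> 2 * a \<and> h \<le> 2 * a")
  case True
  then have "sqrt g + sqrt h \<le> 2 * sqrt (2 * a)"
    using real_sqrt_le_mono by (smt (verit))
  then have "(sqrt g + sqrt h) ^ 3 / (2 * t) \<le> (2 * sqrt (2 * a)) ^ 3 / (2 * t)"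
    using t g h by (intro divide_right_mono power_mono) auto
  also have "\<dots> = 4 * sqrt (2 * a) ^ 3 / t"
    by (simp add: power3_eq_cube)
  finally have "(sqrt g + sqrt h) ^ 3 / (2 * t) \<le> 4 * sqrt (2 * a) ^ 3 / t" .
  moreover have "0 \<le> max 0 (g - a)" "0 \<le> max 0 (h - a)" by simp_all
  ultimately show ?thesis
    using abs_diff_le_sqrt_midpoint_defect[OF g h t] by argo
next
  case False
  then have "\<bar>g - h\<bar> \<le> 2 * max 0 (g - a) + 2 * max 0 (h - a)"
    using g h by (auto simp: abs_if max_def)
  moreover have "0 \<le> 3 * t * (sqrt ((g + h) / 2) - (sqrt g + sqrt h) / 2)"
    using sqrt_midpoint_ge[OF g h] t by simp
  moreover have "0 \<le> 4 * sqrt (2 * a) ^ 3 / t"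
    using a t by simp
  ultimately show ?thesis by linarith
qed

section \<open>Convergence in \<open>L\<^sup>1\<close>\<close>

lemma integral_le_of_nn_integral_le:
  fixes f :: "'a \<Rightarrow> real"
  assumes "integrable M f" "AE x in M. 0 \<le> f x" "(\<integral>\<^sup>+x. ennreal (f x) \<partial>M) \<le> ennreal c" "0 \<le> c"
  shows "(\<integral>x. f x \<partial>M) \<le> c"
  using assms by (simp add: nn_integral_eq_integral)

lemma nn_integral_abs_diff_tendsto_0_iff:
  fixes f :: "nat \<Rightarrow> 'a \<Rightarrow> real"
  assumes "\<And>n. integrable M (f n)" "integrable M g"
  shows "(\<lambda>n. \<integral>\<^sup>+x. ennreal \<bar>f n x - g x\<bar> \<partial>M) \<longlonglongrightarrow> 0 \<longleftrightarrow>
         (\<lambda>n. \<integral>x. \<bar>f n x - g x\<bar> \<partial>M) \<longlonglongrightarrow> 0"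
proof -
  have "(\<lambda>n. \<integral>\<^sup>+x. ennreal \<bar>f n x - g x\<bar> \<partial>M) = (\<lambda>n. ennreal (\<integral>x. \<bar>f n x - g x\<bar> \<partial>M))"
    using assms by (intro ext nn_integral_eq_integral) auto
  then show ?thesis
    using tendsto_ennreal_iff[of "\<lambda>n. \<integral>x. \<bar>f n x - g x\<bar> \<partial>M" sequentially 0] by simp
qed

lemma L1_limit_AE_subseq:
  fixes f :: "nat \<Rightarrow> 'a \<Rightarrow> real"
  assumes "\<And>n. integrable M (f n)" "integrable M g" "(\<lambda>n. \<integral>x. \<bar>f n x - g x\<bar> \<partial>M) \<longlonglongrightarrow> 0"
  obtains r where "strict_mono r" "AE x in M. (\<lambda>n. f (r n) x) \<longlonglongrightarrow> g x"
proof -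
  obtain r where "strict_mono r" "AE x in M. (\<lambda>n. f (r n) x - g x) \<longlonglongrightarrow> 0"
    using tendsto_L1_AE_subseq[of M "\<lambda>n x. f n x - g x"] assms by auto
  then show thesis
    using that by (simp flip: Lim_null)
qed

lemma nn_integral_le_of_AE_tendsto:
  fixes u :: "nat \<Rightarrow> 'a \<Rightarrow> ennreal"
  assumes "\<And>n. u n \<in> borel_measurable M" "AE x in M. (\<lambda>n. u n x) \<longlonglongrightarrow> g x"
    and "\<forall>\<^sub>F n in sequentially. (\<integral>\<^sup>+x. u n x \<partial>M) \<le> c"
  shows "(\<integral>\<^sup>+x. g x \<partial>M) \<le> c"
proof -
  have "(\<integral>\<^sup>+x. g x \<partial>M) = (\<integral>\<^sup>+x. liminf (\<lambda>n. u n x) \<partial>M)"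
    using assms(2) by (intro nn_integral_cong_AE) (auto simp: lim_imp_Liminf)
  also have "\<dots> \<le> liminf (\<lambda>n. \<integral>\<^sup>+x. u n x \<partial>M)"
    using assms(1) by (rule nn_integral_liminf)
  also have "\<dots> \<le> c"
    using assms(3) by (intro Liminf_le) simp_all
  finally show ?thesis .
qed

lemma nn_integral_L1_limit_le:
  fixes f :: "nat \<Rightarrow> 'a \<Rightarrow> real" and V :: "'a \<Rightarrow> real"
  assumes f: "\<And>n. integrable M (f n)" and g: "integrable M g"
    and lim: "(\<lambda>n. \<integral>x. \<bar>f n x - g x\<bar> \<partial>M) \<longlonglongrightarrow> 0"
    and [measurable]: "V \<in> borel_measurable M"
    and bound: "\<And>n. (\<integral>\<^sup>+x. ennreal (V x * \<bar>f n x\<bar>) \<partial>M) \<le> c"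
  shows "(\<integral>\<^sup>+x. ennreal (V x * \<bar>g x\<bar>) \<partial>M) \<le> c"
proof -
  have [measurable]: "\<And>n. f n \<in> borel_measurable M"
    using f by auto
  obtain r where "AE x in M. (\<lambda>n. f (r n) x) \<longlonglongrightarrow> g x"
    using L1_limit_AE_subseq[OF f g lim] by blast
  then have "AE x in M. (\<lambda>n. ennreal (V x * \<bar>f (r n) x\<bar>)) \<longlonglongrightarrow> ennreal (V x * \<bar>g x\<bar>)"
    by eventually_elim (intro tendsto_intros)
  then show ?thesis
    using bound by (intro nn_integral_le_of_AE_tendsto) auto
qed

lemma L1_Cauchy_AE_limit:
  fixes s :: "nat \<Rightarrow> 'a \<Rightarrow> real"
  assumes int: "\<And>n. integrable M (s n)"
    and Cauchy: "\<forall>e>0. \<exists>N. \<forall>i\<ge>N. \<forall>j\<ge>N. (\<integral>x. \<bar>s i x - s j x\<bar> \<partial>M) < e"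
  obtains f where "f \<in> borel_measurable M"
    "\<And>e N n. \<forall>i\<ge>N. \<forall>j\<ge>N. (\<integral>x. \<bar>s i x - s j x\<bar> \<partial>M) < e \<Longrightarrow> N \<le> n \<Longrightarrow>
      (\<integral>\<^sup>+x. ennreal \<bar>s n x - f x\<bar> \<partial>M) \<le> ennreal e"
proof -
  have [measurable]: "\<And>n. s n \<in> borel_measurable M"
    using int by auto
  have "\<exists>N. \<forall>i\<ge>N. \<forall>j\<ge>N. (LINT x|M. norm (s i x - s j x)) < e" if "0 < e" for e
    using Cauchy that by simp
  then obtain r where r: "strict_mono r" and "AE x in M. Cauchy (\<lambda>i. s (r i) x)"
    using cauchy_L1_AE_cauchy_subseq[of M s, OF int] by blast
  define f where "f x = lim (\<lambda>i. s (r i) x)" for x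
  have [measurable]: "f \<in> borel_measurable M"
    unfolding f_def by measurable
  have f_lim: "AE x in M. (\<lambda>i. s (r i) x) \<longlonglongrightarrow> f x"
    using \<open>AE x in M. Cauchy (\<lambda>i. s (r i) x)\<close>
    by eventually_elim (auto simp: f_def Cauchy_convergent_iff convergent_LIMSEQ_iff)
  have "(\<integral>\<^sup>+x. ennreal \<bar>s n x - f x\<bar> \<partial>M) \<le> ennreal e"
    if N: "\<forall>i\<ge>N. \<forall>j\<ge>N. (\<integral>x. \<bar>s i x - s j x\<bar> \<partial>M) < e" and "N \<le> n" for e N n
  proof (rule nn_integral_le_of_AE_tendsto)
    show "AE x in M. (\<lambda>i. ennreal \<bar>s n x - s (r i) x\<bar>) \<longlonglongrightarrow> ennreal \<bar>s n x - f x\<bar>"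
      using f_lim by eventually_elim (intro tendsto_intros)
    show "\<forall>\<^sub>F i in sequentially. (\<integral>\<^sup>+x. ennreal \<bar>s n x - s (r i) x\<bar> \<partial>M) \<le> ennreal e"
      using eventually_ge_at_top[of N]
    proof eventually_elim
      case (elim i)
      then have "(\<integral>x. \<bar>s n x - s (r i) x\<bar> \<partial>M) < e"
        using N \<open>N \<le> n\<close> seq_suble[OF r, of i] by auto
      then show ?case
        using int by (simp add: nn_integral_eq_integral ennreal_leI)
    qed
  qed measurable
  with \<open>f \<in> borel_measurable M\<close> show thesis
    by (rule that)
qed

lemma L1_Cauchy_imp_convergent:
  fixes s :: "nat \<Rightarrow> 'a \<Rightarrow> real"
  assumes int: "\<And>n. integrable M (s n)"
    and Cauchy: "\<forall>e>0. \<exists>N. \<forall>i\<ge>N. \<forall>j\<ge>N. (\<integral>x. \<bar>s i x - s j x\<bar> \<partial>M) < e"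
  obtains f where "integrable M f" "(\<lambda>n. \<integral>x. \<bar>s n x - f x\<bar> \<partial>M) \<longlonglongrightarrow> 0"
proof -
  obtain f where [measurable]: "f \<in> borel_measurable M" and close: "\<And>e N n.
      \<forall>i\<ge>N. \<forall>j\<ge>N. (\<integral>x. \<bar>s i x - s j x\<bar> \<partial>M) < e \<Longrightarrow> N \<le> n \<Longrightarrow>
      (\<integral>\<^sup>+x. ennreal \<bar>s n x - f x\<bar> \<partial>M) \<le> ennreal e"
    using L1_Cauchy_AE_limit[OF int Cauchy] by blast
  have [measurable]: "\<And>n. s n \<in> borel_measurable M"
    using int by auto
  obtain N1 where N1: "\<forall>i\<ge>N1. \<forall>j\<ge>N1. (\<integral>x. \<bar>s i x - s j x\<bar> \<partial>M) < 1"
    using Cauchy by (meson zero_less_one)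
  have "integrable M (\<lambda>x. s N1 x - f x)"
    using close[OF N1 order.refl] by (intro integrableI_bounded) (auto simp: top.not_eq_extremum le_less_trans)
  from Bochner_Integration.integrable_diff[OF int[of N1] this] have f_int: "integrable M f"
    by simp
  have "(\<lambda>n. \<integral>x. \<bar>s n x - f x\<bar> \<partial>M) \<longlonglongrightarrow> 0"
  proof (rule LIMSEQ_I)
    fix e :: real
    assume "0 < e"
    then obtain N where N: "\<forall>i\<ge>N. \<forall>j\<ge>N. (\<integral>x. \<bar>s i x - s j x\<bar> \<partial>M) < e / 2"
      using Cauchy half_gt_zero by blast
    have "norm ((\<integral>x. \<bar>s n x - f x\<bar> \<partial>M) - 0) < e" if "N \<le> n" for n
    proof -
      have "(\<integral>x. \<bar>s n x - f x\<bar> \<partial>M) \<le> e / 2"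
        using close[OF N that] int f_int \<open>0 < e\<close> by (intro integral_le_of_nn_integral_le) auto
      then show ?thesis
        using \<open>0 < e\<close> by simp
    qed
    then show "\<exists>N. \<forall>n\<ge>N. norm ((\<integral>x. \<bar>s n x - f x\<bar> \<partial>M) - 0) < e"
      by blast
  qed
  with f_int show thesis
    using that by blast
qed

lemma mem_L1_closure_iff:
  assumes "\<And>Z. Z \<in> Q \<Longrightarrow> integrable M Z"
  shows "Z \<in> L1_closure M Q \<longleftrightarrow> integrable M Z \<and>
           (\<exists>Zs. (\<forall>n. Zs n \<in> Q) \<and> (\<lambda>n. \<integral>x. \<bar>Zs n x - Z x\<bar> \<partial>M) \<longlonglongrightarrow> 0)"
proof -
  have "(\<lambda>n. \<integral>\<^sup>+x. ennreal \<bar>Zs n x - Z x\<bar> \<partial>M) \<longlonglongrightarrow> 0 \<longleftrightarrow> (\<lambda>n. \<integral>x. \<bar>Zs n x - Z x\<bar> \<partial>M) \<longlonglongrightarrow> 0"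
    if "\<forall>n. Zs n \<in> Q" "integrable M Z" for Zs
    using that assms by (intro nn_integral_abs_diff_tendsto_0_iff) auto
  then show ?thesis
    unfolding L1_closure_def by blast
qed

lemma L1_closure_nonneg:
  assumes "Q \<subseteq> densities M" "Z \<in> L1_closure M Q"
  shows "AE x in M. 0 \<le> Z x"
proof -
  have Q: "\<And>Z. Z \<in> Q \<Longrightarrow> integrable M Z \<and> (AE x in M. 0 \<le> Z x)"
    using assms(1) by (auto simp: densities_def)
  then obtain Zs where Zs: "\<And>n. Zs n \<in> Q" and "integrable M Z"
    and "(\<lambda>n. \<integral>x. \<bar>Zs n x - Z x\<bar> \<partial>M) \<longlonglongrightarrow> 0"
    using assms(2) mem_L1_closure_iff[of Q M Z] by blast
  then obtain r where "AE x in M. (\<lambda>n. Zs (r n) x) \<longlonglongrightarrow> Z x"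
    using L1_limit_AE_subseq[of M Zs Z] Q by blast
  moreover have "AE x in M. \<forall>n. 0 \<le> Zs (r n) x"
    using Q Zs by (simp add: AE_all_countable)
  ultimately show ?thesis
    by eventually_elim (auto intro: LIMSEQ_le_const)
qed

section \<open>Uniform integrability\<close>

lemma unif_integrable_tail_less:
  assumes "unif_integrable M F" "0 < e"
  obtains K where "0 \<le> K"
    "\<And>f. f \<in> F \<Longrightarrow> (\<integral>\<^sup>+x. ennreal \<bar>f x\<bar> * indicator {y. K < \<bar>f y\<bar>} x \<partial>M) < ennreal e"
proof -
  let ?tail = "\<lambda>K. \<Squnion>f\<in>F. \<integral>\<^sup>+x. ennreal \<bar>f x\<bar> * indicator {y. K < \<bar>f y\<bar>} x \<partial>M"
  have "(?tail \<longlongrightarrow> 0) at_top"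
    using assms(1) unfolding unif_integrable_def by blast
  then have "\<forall>\<^sub>F K in at_top. ?tail K < ennreal e"
    by (rule order_tendstoD(2)) (simp add: assms(2))
  with eventually_ge_at_top[of 0] have "\<forall>\<^sub>F K in at_top. 0 \<le> K \<and> ?tail K < ennreal e"
    by (rule eventually_conj)
  then obtain K where "0 \<le> K" "?tail K < ennreal e"
    unfolding eventually_at_top_linorder by blast
  then show thesis
    using that by (meson SUP_upper order.strict_trans1)
qed

lemma (in prob_space) unif_integrable_L1_bounded:
  assumes "unif_integrable M F"
  obtains B where "\<And>f. f \<in> F \<Longrightarrow> integrable M f" "\<And>f. f \<in> F \<Longrightarrow> (\<integral>x. \<bar>f x\<bar> \<partial>M) \<le> B"
proof -
  obtain K where K: "0 \<le> K"
    "\<And>f. f \<in> F \<Longrightarrow> (\<integral>\<^sup>+x. ennreal \<bar>f x\<bar> * indicator {y. K < \<bar>f y\<bar>} x \<partial>M) < ennreal 1"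
    using unif_integrable_tail_less[OF assms, of 1] by auto
  have meas: "f \<in> borel_measurable M" if "f \<in> F" for f
    using assms that unfolding unif_integrable_def by auto
  have bound: "(\<integral>\<^sup>+x. ennreal \<bar>f x\<bar> \<partial>M) \<le> ennreal (1 + K)" if f: "f \<in> F" for f
  proof -
    have "(\<integral>\<^sup>+x. ennreal \<bar>f x\<bar> \<partial>M)
        \<le> (\<integral>\<^sup>+x. ennreal \<bar>f x\<bar> * indicator {y. K < \<bar>f y\<bar>} x + ennreal K \<partial>M)"
      by (intro nn_integral_mono) (auto simp: indicator_def ennreal_leI)
    also have "\<dots> = (\<integral>\<^sup>+x. ennreal \<bar>f x\<bar> * indicator {y. K < \<bar>f y\<bar>} x \<partial>M) + ennreal K"
      using meas[OF f] by (subst nn_integral_add) (auto simp: emeasure_space_1)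
    also have "\<dots> \<le> ennreal (1 + K)"
      using K(2)[OF f] K(1) by (simp add: ennreal_plus add_mono)
    finally show ?thesis .
  qed
  have int: "integrable M f" if "f \<in> F" for f
    using bound[OF that] meas[OF that]
    by (intro integrableI_bounded) (auto simp: top.not_eq_extremum intro: le_less_trans)
  moreover have "(\<integral>x. \<bar>f x\<bar> \<partial>M) \<le> 1 + K" if "f \<in> F" for f
    using bound[OF that] int[OF that] K(1)
    by (intro integral_le_of_nn_integral_le) auto
  ultimately show thesis
    by (rule that)
qed

lemma (in prob_space) unif_integrable_pos_part_tail:
  assumes "unif_integrable M F" "0 < e"
  obtains a where "0 \<le> a" "\<And>f. f \<in> F \<Longrightarrow> (\<integral>x. max 0 (f x - a) \<partial>M) \<le> e"
proof -
  obtain a where a: "0 \<le> a"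
    "\<And>f. f \<in> F \<Longrightarrow> (\<integral>\<^sup>+x. ennreal \<bar>f x\<bar> * indicator {y. a < \<bar>f y\<bar>} x \<partial>M) < ennreal e"
    using unif_integrable_tail_less[OF assms] by auto
  have int: "\<And>f. f \<in> F \<Longrightarrow> integrable M f"
    using unif_integrable_L1_bounded[OF assms(1)] by metis
  have "(\<integral>x. max 0 (f x - a) \<partial>M) \<le> e" if f: "f \<in> F" for f
  proof (rule integral_le_of_nn_integral_le)
    have "(\<integral>\<^sup>+x. ennreal (max 0 (f x - a)) \<partial>M)
        \<le> (\<integral>\<^sup>+x. ennreal \<bar>f x\<bar> * indicator {y. a < \<bar>f y\<bar>} x \<partial>M)"
      using a(1) by (intro nn_integral_mono) (auto simp: indicator_def ennreal_leI ennreal_eq_0_iff)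
    then show "(\<integral>\<^sup>+x. ennreal (max 0 (f x - a)) \<partial>M) \<le> ennreal e"
      using a(2)[OF f] by simp
  qed (use int[OF f] assms(2) in auto)
  with a(1) show thesis
    by (rule that)
qed

section \<open>Near-maximisers of \<open>E[\<surd>Z]\<close> form an \<open>L\<^sup>1\<close>-Cauchy sequence\<close>

lemma (in finite_measure) integrable_sqrt:
  assumes "integrable M f"
  shows "integrable M (\<lambda>x. sqrt (f x))"
proof (rule Bochner_Integration.integrable_bound)
  show "integrable M (\<lambda>x. 1 + \<bar>f x\<bar>)"
    using assms by auto
  show "(\<lambda>x. sqrt (f x)) \<in> borel_measurable M"
    using assms by measurable
  have "sqrt \<bar>y\<bar> \<le> 1 + \<bar>y\<bar>" for y :: real
    using arith_geo_mean_sqrt[of "\<bar>y\<bar>" 1] by simp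
  then show "AE x in M. norm (sqrt (f x)) \<le> norm (1 + \<bar>f x\<bar>)"
    by (simp add: real_sqrt_abs')
qed

lemma (in prob_space) integral_sqrt_density_bounds:
  assumes "Z \<in> densities M"
  shows "0 \<le> (\<integral>x. sqrt (Z x) \<partial>M)" "(\<integral>x. sqrt (Z x) \<partial>M) \<le> 1"
proof -
  have Z: "integrable M Z" "AE x in M. 0 \<le> Z x" "(\<integral>x. Z x \<partial>M) = 1"
    using assms by (auto simp: densities_def)
  show "0 \<le> (\<integral>x. sqrt (Z x) \<partial>M)"
    using Z(2) by (intro integral_nonneg_AE) auto
  have "AE x in M. sqrt (Z x) \<le> (Z x + 1) / 2"
    using Z(2) by eventually_elim (use arith_geo_mean_sqrt[of _ 1] in auto)
  then have "(\<integral>x. sqrt (Z x) \<partial>M) \<le> (\<integral>x. (Z x + 1) / 2 \<partial>M)"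
    using integrable_sqrt[OF Z(1)] Z(1) by (intro integral_mono_AE) auto
  also have "\<dots> = 1"
    using Z(1,3) by (simp add: prob_space)
  finally show "(\<integral>x. sqrt (Z x) \<partial>M) \<le> 1" .
qed

lemma (in prob_space) integral_abs_diff_le_sqrt_midpoint_defect:
  fixes g h :: "'a \<Rightarrow> real"
  assumes int: "integrable M g" "integrable M h" and nonneg: "AE x in M. 0 \<le> g x" "AE x in M. 0 \<le> h x"
    and "0 < t" "0 \<le> a"
  shows "(\<integral>x. \<bar>g x - h x\<bar> \<partial>M)
    \<le> 3 * t * (\<integral>x. sqrt ((g x + h x) / 2) - (sqrt (g x) + sqrt (h x)) / 2 \<partial>M) + 4 * sqrt (2 * a) ^ 3 / t
      + 2 * (\<integral>x. max 0 (g x - a) \<partial>M) + 2 * (\<integral>x. max 0 (h x - a) \<partial>M)"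
proof -
  have int_defect: "integrable M (\<lambda>x. sqrt ((g x + h x) / 2) - (sqrt (g x) + sqrt (h x)) / 2)"
    using int by (intro Bochner_Integration.integrable_diff Bochner_Integration.integrable_divide
        Bochner_Integration.integrable_add integrable_sqrt) auto
  have "AE x in M. \<bar>g x - h x\<bar> \<le> 3 * t * (sqrt ((g x + h x) / 2) - (sqrt (g x) + sqrt (h x)) / 2)
      + 4 * sqrt (2 * a) ^ 3 / t + 2 * max 0 (g x - a) + 2 * max 0 (h x - a)"
    using nonneg(1,2) by eventually_elim
      (use \<open>0 < t\<close> \<open>0 \<le> a\<close> in \<open>simp add: abs_diff_le_sqrt_midpoint_defect_truncated\<close>)
  then have "(\<integral>x. \<bar>g x - h x\<bar> \<partial>M) \<le> (\<integral>x. 3 * t * (sqrt ((g x + h x) / 2) - (sqrt (g x) + sqrt (h x)) / 2)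
      + 4 * sqrt (2 * a) ^ 3 / t + 2 * max 0 (g x - a) + 2 * max 0 (h x - a) \<partial>M)"
    using int int_defect by (intro integral_mono_AE) auto
  also have "\<dots> = 3 * t * (\<integral>x. sqrt ((g x + h x) / 2) - (sqrt (g x) + sqrt (h x)) / 2 \<partial>M)
      + 4 * sqrt (2 * a) ^ 3 / t + 2 * (\<integral>x. max 0 (g x - a) \<partial>M) + 2 * (\<integral>x. max 0 (h x - a) \<partial>M)"
    using int int_defect by (simp add: prob_space)
  finally show ?thesis .
qed

lemma (in prob_space) L1_Cauchy_of_sqrt_midpoint_defect:
  fixes Z :: "nat \<Rightarrow> 'a \<Rightarrow> real"
  assumes int: "\<And>n. integrable M (Z n)" and nonneg: "\<And>n. AE x in M. 0 \<le> Z n x"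
    and tail: "\<forall>e>0. \<exists>a\<ge>0. \<forall>n. (\<integral>x. max 0 (Z n x - a) \<partial>M) \<le> e"
    and defect: "\<forall>\<delta>>0. \<exists>N. \<forall>n\<ge>N. \<forall>m\<ge>N.
           (\<integral>x. sqrt ((Z n x + Z m x) / 2) - (sqrt (Z n x) + sqrt (Z m x)) / 2 \<partial>M) < \<delta>"
  shows "\<forall>\<epsilon>>0. \<exists>N. \<forall>n\<ge>N. \<forall>m\<ge>N. (\<integral>x. \<bar>Z n x - Z m x\<bar> \<partial>M) < \<epsilon>"
proof (intro allI impI)
  fix \<epsilon> :: real
  assume "0 < \<epsilon>"
  define e where "e = \<epsilon> / 6"
  have e: "0 < e"
    using \<open>0 < \<epsilon>\<close> by (simp add: e_def)
  obtain a where a: "0 \<le> a" "\<And>n. (\<integral>x. max 0 (Z n x - a) \<partial>M) \<le> e"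
    using tail e by auto
  define t where "t = 4 * sqrt (2 * a) ^ 3 / e + 1"
  have t_pos: "0 < t"
    using e a(1) by (simp add: t_def add_nonneg_pos)
  have "4 * sqrt (2 * a) ^ 3 < t * e"
    using e by (simp add: t_def field_simps)
  with t_pos have t: "0 < t" "4 * sqrt (2 * a) ^ 3 / t < e"
    by (simp_all add: divide_less_eq mult.commute)
  obtain N where N: "\<forall>n\<ge>N. \<forall>m\<ge>N.
      (\<integral>x. sqrt ((Z n x + Z m x) / 2) - (sqrt (Z n x) + sqrt (Z m x)) / 2 \<partial>M) < e / (3 * t)"
    using defect e t by (meson divide_pos_pos mult_pos_pos zero_less_numeral)
  have "(\<integral>x. \<bar>Z n x - Z m x\<bar> \<partial>M) < \<epsilon>" if "N \<le> n" "N \<le> m" for n m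
  proof -
    have "3 * t * (\<integral>x. sqrt ((Z n x + Z m x) / 2) - (sqrt (Z n x) + sqrt (Z m x)) / 2 \<partial>M) < e"
      using N that t mult_strict_left_mono[of _ "e / (3 * t)" "3 * t"] by simp
    then show ?thesis
      using integral_abs_diff_le_sqrt_midpoint_defect[OF int int nonneg nonneg t(1) a(1), of n m]
        t(2) a(2)[of n] a(2)[of m] e_def by linarith
  qed
  then show "\<exists>N. \<forall>n\<ge>N. \<forall>m\<ge>N. (\<integral>x. \<bar>Z n x - Z m x\<bar> \<partial>M) < \<epsilon>"
    by blast
qed

lemma uniformly_small_if_bounded_by_Cauchy:
  fixes D :: "nat \<Rightarrow> nat \<Rightarrow> real" and b d :: "nat \<Rightarrow> real"
  assumes "Cauchy b" "d \<longlonglongrightarrow> 0"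
    and bound: "\<And>n m. n \<le> m \<Longrightarrow> D n m \<le> \<bar>b n - b m\<bar> + d n"
    and sym: "\<And>n m. D n m = D m n"
  shows "\<forall>\<delta>>0. \<exists>N. \<forall>n\<ge>N. \<forall>m\<ge>N. D n m < \<delta>"
proof (intro allI impI)
  fix \<delta> :: real
  assume "0 < \<delta>"
  then obtain N1 where N1: "\<forall>n\<ge>N1. \<forall>m\<ge>N1. \<bar>b n - b m\<bar> < \<delta> / 2"
    using CauchyD[OF \<open>Cauchy b\<close>, of "\<delta> / 2"] by auto
  obtain N2 where N2: "\<forall>n\<ge>N2. \<bar>d n\<bar> < \<delta> / 2"
    using LIMSEQ_D[OF \<open>d \<longlonglongrightarrow> 0\<close>, of "\<delta> / 2"] \<open>0 < \<delta>\<close> by auto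
  have small: "D n m < \<delta>" if "max N1 N2 \<le> n" "n \<le> m" for n m
  proof -
    have "\<bar>b n - b m\<bar> < \<delta> / 2" "\<bar>d n\<bar> < \<delta> / 2"
      using N1 N2 that by auto
    then show ?thesis
      using bound[OF that(2)] abs_ge_self[of "d n"] by linarith
  qed
  have "D n m < \<delta>" if "max N1 N2 \<le> n" "max N1 N2 \<le> m" for n m
    using that small[of n m] small[of m n] sym[of n m] by linarith
  then show "\<exists>N. \<forall>n\<ge>N. \<forall>m\<ge>N. D n m < \<delta>"
    by blast
qed

lemma Cauchy_Sup_image_decseq:
  fixes S :: "'b \<Rightarrow> real"
  assumes "decseq A" and nonempty: "\<And>n. A n \<noteq> {}"
    and bounds: "\<And>n x. x \<in> A n \<Longrightarrow> lo \<le> S x \<and> S x \<le> hi"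
  shows "Cauchy (\<lambda>n. Sup (S ` A n))"
proof -
  have bdd: "bdd_above (S ` A n)" for n
    using bounds by (intro bdd_aboveI[of _ hi]) auto
  have "Sup (S ` A (Suc n)) \<le> Sup (S ` A n)" for n
    using \<open>decseq A\<close> nonempty bdd by (intro cSup_subset_mono image_mono) (auto simp: decseq_Suc_iff)
  then have "decseq (\<lambda>n. Sup (S ` A n))"
    by (rule decseq_SucI)
  moreover have "lo \<le> Sup (S ` A n)" for n
  proof -
    obtain x where "x \<in> A n"
      using nonempty by blast
    then show ?thesis
      using bounds bdd by (meson cSup_upper image_eqI order_trans)
  qed
  ultimately obtain L where "(\<lambda>n. Sup (S ` A n)) \<longlonglongrightarrow> L"
    using decseq_convergent by blast
  then show ?thesis
    by (rule LIMSEQ_imp_Cauchy)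
qed

lemma (in prob_space) sqrt_midpoint_defect_vanishing_sequence:
  fixes A :: "nat \<Rightarrow> ('a \<Rightarrow> real) set"
  assumes nonempty: "\<And>n. A n \<noteq> {}" and densities: "\<And>n. A n \<subseteq> densities M"
    and "decseq A"
    and midpoint: "\<forall>n m. n \<le> m \<longrightarrow> (\<forall>Z\<in>A n. \<forall>Z'\<in>A m. (\<lambda>x. (Z x + Z' x) / 2) \<in> A n)"
  obtains Z where "\<And>n. Z n \<in> A n"
    and "\<forall>\<delta>>0. \<exists>N. \<forall>n\<ge>N. \<forall>m\<ge>N.
           (\<integral>x. sqrt ((Z n x + Z m x) / 2) - (sqrt (Z n x) + sqrt (Z m x)) / 2 \<partial>M) < \<delta>"
proof -
  define S where "S Z = (\<integral>x. sqrt (Z x) \<partial>M)" for Z :: "'a \<Rightarrow> real"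
  define b where "b n = Sup (S ` A n)" for n
  have S_bounds: "0 \<le> S Z" "S Z \<le> 1" if "Z \<in> A n" for Z n
    using integral_sqrt_density_bounds[of Z] densities[of n] that unfolding S_def by auto
  have bdd: "bdd_above (S ` A n)" for n
    using S_bounds by (intro bdd_aboveI[of _ 1]) auto
  have S_le_b: "S Z \<le> b n" if "Z \<in> A n" for Z n
    unfolding b_def using bdd that by (intro cSup_upper) auto
  have "\<exists>Z\<in>A n. b n - 1 / Suc n < S Z" for n
  proof -
    have "b n - 1 / Suc n < Sup (S ` A n)"
      by (simp add: b_def)
    then show ?thesis
      using less_cSupD[of "S ` A n"] nonempty[of n] by blast
  qed
  then obtain Z where Z: "\<And>n. Z n \<in> A n" and Z_max: "\<And>n. b n - 1 / Suc n < S (Z n)"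
    by metis
  have "Cauchy b"
    unfolding b_def using \<open>decseq A\<close> nonempty S_bounds by (intro Cauchy_Sup_image_decseq) auto
  define D where "D n m = (\<integral>x. sqrt ((Z n x + Z m x) / 2) - (sqrt (Z n x) + sqrt (Z m x)) / 2 \<partial>M)" for n m
  have "D n m \<le> \<bar>b n - b m\<bar> + 1 / Suc n" if "n \<le> m" for n m
  proof -
    have int: "integrable M (Z k)" for k
      using densities Z by (auto simp: densities_def)
    have "(\<lambda>x. (Z n x + Z m x) / 2) \<in> A n"
      using midpoint that Z by blast
    then have "S (\<lambda>x. (Z n x + Z m x) / 2) \<le> b n"
      by (rule S_le_b)
    moreover have "1 / Suc m \<le> 1 / Suc n"
      using that frac_le[of 1 1 "Suc n" "Suc m"] by simp
    moreover have "D n m = S (\<lambda>x. (Z n x + Z m x) / 2) - (S (Z n) + S (Z m)) / 2"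
      unfolding D_def S_def using int by (simp add: integrable_sqrt)
    ultimately have "D n m < (b n - b m) / 2 + 1 / Suc n"
      using Z_max[of n] Z_max[of m] by argo
    moreover have "(b n - b m) / 2 \<le> \<bar>b n - b m\<bar>"
      by (simp add: abs_if)
    ultimately show ?thesis
      by argo
  qed
  moreover have "(\<lambda>n. 1 / Suc n) \<longlonglongrightarrow> 0"
    using LIMSEQ_inverse_real_of_nat by (simp add: inverse_eq_divide)
  moreover have "D n m = D m n" for n m
    by (simp add: D_def add.commute)
  ultimately have "\<forall>\<delta>>0. \<exists>N. \<forall>n\<ge>N. \<forall>m\<ge>N. D n m < \<delta>"
    using uniformly_small_if_bounded_by_Cauchy[OF \<open>Cauchy b\<close>] by blast
  with Z show thesis
    unfolding D_def by (rule that)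
qed

section \<open>Expectations weighted by a density\<close>

lemma neg_expect_eq_integral:
  fixes Z X :: "'a \<Rightarrow> real"
  assumes [measurable]: "Z \<in> borel_measurable M" "X \<in> borel_measurable M"
    and nonneg: "AE x in M. 0 \<le> Z x" and int: "integrable M (\<lambda>x. Z x * X x)"
  shows "neg_expect M Z X = ereal (- (\<integral>x. Z x * X x \<partial>M))"
proof -
  have int_neg: "integrable M (\<lambda>x. Z x * max 0 (- X x))"
    and int_pos: "integrable M (\<lambda>x. Z x * max 0 (X x))"
    by (auto intro!: Bochner_Integration.integrable_bound[OF int] simp: abs_mult mult_left_mono)
  have nonneg_neg: "AE x in M. 0 \<le> Z x * max 0 (- X x)"
    and nonneg_pos: "AE x in M. 0 \<le> Z x * max 0 (X x)"
    using nonneg by auto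
  have "(\<integral>x. Z x * max 0 (- X x) \<partial>M) - (\<integral>x. Z x * max 0 (X x) \<partial>M)
      = (\<integral>x. Z x * max 0 (- X x) - Z x * max 0 (X x) \<partial>M)"
    using int_neg int_pos by simp
  also have "\<dots> = (\<integral>x. - (Z x * X x) \<partial>M)"
    by (rule Bochner_Integration.integral_cong) (auto simp: max_def algebra_simps)
  finally have "(\<integral>x. Z x * max 0 (- X x) \<partial>M) - (\<integral>x. Z x * max 0 (X x) \<partial>M) = - (\<integral>x. Z x * X x \<partial>M)"
    by simp
  then show ?thesis
    unfolding neg_expect_def Let_def
    using nn_integral_eq_integral[OF int_neg nonneg_neg] nn_integral_eq_integral[OF int_pos nonneg_pos]
      integral_nonneg_AE[OF nonneg_neg] integral_nonneg_AE[OF nonneg_pos]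
    by simp
qed

lemma integral_mult_diff_le_truncated:
  fixes \<rho> Z1 Z2 :: "'a \<Rightarrow> real"
  assumes [measurable]: "\<rho> \<in> borel_measurable M"
    and int: "integrable M Z1" "integrable M Z2"
      "integrable M (\<lambda>x. \<rho> x * Z1 x)" "integrable M (\<lambda>x. \<rho> x * Z2 x)"
    and "0 \<le> L"
  defines "V x \<equiv> \<bar>\<rho> x\<bar> * indicator {y. L < \<bar>\<rho> y\<bar>} x"
  shows "\<bar>(\<integral>x. \<rho> x * Z1 x \<partial>M) - (\<integral>x. \<rho> x * Z2 x \<partial>M)\<bar>
    \<le> L * (\<integral>x. \<bar>Z1 x - Z2 x\<bar> \<partial>M) + (\<integral>x. V x * \<bar>Z1 x\<bar> \<partial>M) + (\<integral>x. V x * \<bar>Z2 x\<bar> \<partial>M)"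
proof -
  have int_V: "integrable M (\<lambda>x. V x * \<bar>Z x\<bar>)"
    if "integrable M (\<lambda>x. \<rho> x * Z x)" "integrable M Z" for Z
  proof (rule Bochner_Integration.integrable_bound[OF that(1)])
    have [measurable]: "Z \<in> borel_measurable M"
      using that(2) by auto
    show "(\<lambda>x. V x * \<bar>Z x\<bar>) \<in> borel_measurable M"
      unfolding V_def by measurable
  qed (auto simp: V_def indicator_def abs_mult)
  have "\<bar>(\<integral>x. \<rho> x * Z1 x \<partial>M) - (\<integral>x. \<rho> x * Z2 x \<partial>M)\<bar> = \<bar>\<integral>x. \<rho> x * Z1 x - \<rho> x * Z2 x \<partial>M\<bar>"
    using int by simp
  also have "\<dots> \<le> (\<integral>x. \<bar>\<rho> x * Z1 x - \<rho> x * Z2 x\<bar> \<partial>M)"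
    by (rule integral_abs_bound)
  also have "\<dots> \<le> (\<integral>x. L * \<bar>Z1 x - Z2 x\<bar> + V x * \<bar>Z1 x\<bar> + V x * \<bar>Z2 x\<bar> \<partial>M)"
  proof (rule integral_mono)
    fix x
    show "\<bar>\<rho> x * Z1 x - \<rho> x * Z2 x\<bar> \<le> L * \<bar>Z1 x - Z2 x\<bar> + V x * \<bar>Z1 x\<bar> + V x * \<bar>Z2 x\<bar>"
    proof (cases "L < \<bar>\<rho> x\<bar>")
      case True
      have "\<bar>\<rho> x * Z1 x - \<rho> x * Z2 x\<bar> \<le> \<bar>\<rho> x\<bar> * \<bar>Z1 x\<bar> + \<bar>\<rho> x\<bar> * \<bar>Z2 x\<bar>"
        by (metis abs_mult abs_triangle_ineq4)
      moreover have "0 \<le> L * \<bar>Z1 x - Z2 x\<bar>"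
        using \<open>0 \<le> L\<close> by simp
      ultimately show ?thesis
        using True by (simp add: V_def)
    next
      case False
      then have "\<bar>\<rho> x\<bar> * \<bar>Z1 x - Z2 x\<bar> \<le> L * \<bar>Z1 x - Z2 x\<bar>"
        by (intro mult_right_mono) auto
      then show ?thesis
        using False by (simp add: V_def abs_mult flip: right_diff_distrib)
    qed
  qed (use int int_V in auto)
  also have "\<dots> = L * (\<integral>x. \<bar>Z1 x - Z2 x\<bar> \<partial>M) + (\<integral>x. V x * \<bar>Z1 x\<bar> \<partial>M) + (\<integral>x. V x * \<bar>Z2 x\<bar> \<partial>M)"
    using int int_V by simp
  finally show ?thesis .
qed

lemma nn_integral_product_tail_le:
  fixes \<rho> Z :: "'a \<Rightarrow> real"
  assumes [measurable]: "\<rho> \<in> borel_measurable M" "Z \<in> borel_measurable M"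
    and "integrable M \<rho>" "0 \<le> K" "0 < L"
  shows "(\<integral>\<^sup>+x. ennreal (\<bar>\<rho> x\<bar> * indicator {y. L < \<bar>\<rho> y\<bar>} x * \<bar>Z x\<bar>) \<partial>M)
    \<le> (\<integral>\<^sup>+x. ennreal \<bar>\<rho> x * Z x\<bar> * indicator {y. K < \<bar>\<rho> y * Z y\<bar>} x \<partial>M)
      + ennreal (K / L * (\<integral>x. \<bar>\<rho> x\<bar> \<partial>M))"
proof -
  \<comment> \<open>where \<open>|\<rho> Z| \<le> K\<close> but \<open>|\<rho>| > L\<close>, the weight \<open>|Z|\<close> is at most \<open>K / L\<close>\<close>
  have pointwise: "\<bar>\<rho> x\<bar> * indicator {y. L < \<bar>\<rho> y\<bar>} x * \<bar>Z x\<bar>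
      \<le> \<bar>\<rho> x * Z x\<bar> * indicator {y. K < \<bar>\<rho> y * Z y\<bar>} x + K / L * \<bar>\<rho> x\<bar>" for x
  proof (cases "L < \<bar>\<rho> x\<bar> \<and> \<bar>\<rho> x * Z x\<bar> \<le> K")
    case True
    then have "K \<le> K / L * \<bar>\<rho> x\<bar>"
      using \<open>0 \<le> K\<close> \<open>0 < L\<close> by (simp add: field_simps mult_left_mono)
    then show ?thesis
      using True by (simp add: abs_mult)
  next
    case False
    have "0 \<le> K / L * \<bar>\<rho> x\<bar>"
      using \<open>0 \<le> K\<close> \<open>0 < L\<close> by simp
    then show ?thesis
      using False by (auto simp: abs_mult indicator_def)
  qed
  have "(\<integral>\<^sup>+x. ennreal (\<bar>\<rho> x\<bar> * indicator {y. L < \<bar>\<rho> y\<bar>} x * \<bar>Z x\<bar>) \<partial>M)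
      \<le> (\<integral>\<^sup>+x. ennreal \<bar>\<rho> x * Z x\<bar> * indicator {y. K < \<bar>\<rho> y * Z y\<bar>} x + ennreal (K / L * \<bar>\<rho> x\<bar>) \<partial>M)"
  proof (rule nn_integral_mono)
    fix x
    have "ennreal (\<bar>\<rho> x\<bar> * indicator {y. L < \<bar>\<rho> y\<bar>} x * \<bar>Z x\<bar>)
        \<le> ennreal (\<bar>\<rho> x * Z x\<bar> * indicator {y. K < \<bar>\<rho> y * Z y\<bar>} x + K / L * \<bar>\<rho> x\<bar>)"
      using pointwise by (rule ennreal_leI)
    also have "\<dots> = ennreal \<bar>\<rho> x * Z x\<bar> * indicator {y. K < \<bar>\<rho> y * Z y\<bar>} x + ennreal (K / L * \<bar>\<rho> x\<bar>)"
      using \<open>0 \<le> K\<close> \<open>0 < L\<close> by (subst ennreal_plus) (auto simp: indicator_def)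
    finally show "ennreal (\<bar>\<rho> x\<bar> * indicator {y. L < \<bar>\<rho> y\<bar>} x * \<bar>Z x\<bar>)
        \<le> ennreal \<bar>\<rho> x * Z x\<bar> * indicator {y. K < \<bar>\<rho> y * Z y\<bar>} x + ennreal (K / L * \<bar>\<rho> x\<bar>)" .
  qed
  also have "\<dots> = (\<integral>\<^sup>+x. ennreal \<bar>\<rho> x * Z x\<bar> * indicator {y. K < \<bar>\<rho> y * Z y\<bar>} x \<partial>M)
      + (\<integral>\<^sup>+x. ennreal (K / L * \<bar>\<rho> x\<bar>) \<partial>M)"
    by (rule nn_integral_add) measurable
  also have "(\<integral>\<^sup>+x. ennreal (K / L * \<bar>\<rho> x\<bar>) \<partial>M) = ennreal (K / L * (\<integral>x. \<bar>\<rho> x\<bar> \<partial>M))"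
    using assms by (subst nn_integral_eq_integral) auto
  finally show ?thesis .
qed

section \<open>Condition UI\<close>

lemma SUP_inner_attained_on_closure:
  fixes S :: "'a::real_inner set"
  assumes "compact (closure S)" "S \<noteq> {}"
  obtains c where "c \<in> closure S" "\<And>c'. c' \<in> closure S \<Longrightarrow> \<pi> \<bullet> c' \<le> \<pi> \<bullet> c"
    "(\<Squnion>y\<in>S. ereal (\<pi> \<bullet> y)) = ereal (\<pi> \<bullet> c)"
proof -
  have "closure S \<noteq> {}" "continuous_on (closure S) (\<lambda>y. \<pi> \<bullet> y)"
    using assms(2) by (auto intro: continuous_intros)
  then obtain c where c: "c \<in> closure S" and c_max: "\<And>c'. c' \<in> closure S \<Longrightarrow> \<pi> \<bullet> c' \<le> \<pi> \<bullet> c"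
    using continuous_attains_sup[OF assms(1)] by blast
  have "(\<Squnion>y\<in>S. ereal (\<pi> \<bullet> y)) \<le> ereal (\<pi> \<bullet> c)"
    using c_max closure_subset by (fastforce intro: SUP_least)
  moreover have "ereal (\<pi> \<bullet> c) \<le> (\<Squnion>y\<in>S. ereal (\<pi> \<bullet> y))"
  proof -
    obtain y where y: "\<And>n. y n \<in> S" and "y \<longlonglongrightarrow> c"
      using c unfolding closure_sequential by blast
    then have "(\<lambda>n. ereal (\<pi> \<bullet> y n)) \<longlonglongrightarrow> ereal (\<pi> \<bullet> c)"
      by (intro tendsto_intros)
    then show ?thesis
      by (rule LIMSEQ_le_const2) (use y SUP_upper[of _ S "\<lambda>z. ereal (\<pi> \<bullet> z)"] in blast)
  qed
  ultimately show thesis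
    using that c c_max by (simp add: antisym)
qed

locale condition_UI = prob_space M for M :: "'a measure" +
  fixes R :: "'d::finite \<Rightarrow> 'a \<Rightarrow> real" and r :: real and Q :: "('a \<Rightarrow> real) set"
  assumes integrable_R: "\<And>i. integrable M (R i)"
    and Q_densities: "Q \<subseteq> densities M"
    and Q_convex: "\<And>Z1 Z2 t. Z1 \<in> Q \<Longrightarrow> Z2 \<in> Q \<Longrightarrow> 0 \<le> t \<Longrightarrow> t \<le> 1 \<Longrightarrow>
      (\<lambda>x. t * Z1 x + (1 - t) * Z2 x) \<in> Q"
    and one_in_Q: "(\<lambda>_. 1) \<in> Q"
    and UI_Q: "unif_integrable M Q"
    and UI_RQ: "\<And>i. unif_integrable M {(\<lambda>x. R i x * Z x) | Z. Z \<in> Q}"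
begin

lemma measurable_R [measurable]: "R i \<in> borel_measurable M"
  using integrable_R by auto

lemma Q_integrable: "Z \<in> Q \<Longrightarrow> integrable M Z"
  and Q_nonneg: "Z \<in> Q \<Longrightarrow> AE x in M. 0 \<le> Z x"
  and Q_integral: "Z \<in> Q \<Longrightarrow> (\<integral>x. Z x \<partial>M) = 1"
  using Q_densities unfolding densities_def by auto

lemma R_mult_Q_L1_bounded:
  obtains B where "\<And>Z. Z \<in> Q \<Longrightarrow> integrable M (\<lambda>x. R i x * Z x)"
    "\<And>Z. Z \<in> Q \<Longrightarrow> (\<integral>x. \<bar>R i x * Z x\<bar> \<partial>M) \<le> B"
proof -
  obtain B where "\<And>f. f \<in> {(\<lambda>x. R i x * Z x) | Z. Z \<in> Q} \<Longrightarrow> integrable M f"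
    "\<And>f. f \<in> {(\<lambda>x. R i x * Z x) | Z. Z \<in> Q} \<Longrightarrow> (\<integral>x. \<bar>f x\<bar> \<partial>M) \<le> B"
    using unif_integrable_L1_bounded[OF UI_RQ] by blast
  then show thesis
    using that[of B] by blast
qed

lemma R_mult_Q_integrable: "Z \<in> Q \<Longrightarrow> integrable M (\<lambda>x. R i x * Z x)"
  using R_mult_Q_L1_bounded by metis

lemma R_tail_uniform:
  assumes "0 < e"
  obtains L where "0 < L"
    "\<And>Z. Z \<in> Q \<Longrightarrow> (\<integral>\<^sup>+x. ennreal (\<bar>R i x\<bar> * indicator {y. L < \<bar>R i y\<bar>} x * \<bar>Z x\<bar>) \<partial>M) \<le> ennreal e"
proof -
  obtain K where K: "0 \<le> K" "\<And>f. f \<in> {(\<lambda>x. R i x * Z x) | Z. Z \<in> Q} \<Longrightarrow>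
      (\<integral>\<^sup>+x. ennreal \<bar>f x\<bar> * indicator {y. K < \<bar>f y\<bar>} x \<partial>M) < ennreal (e / 2)"
    using unif_integrable_tail_less[OF UI_RQ[of i], of "e / 2"] \<open>0 < e\<close> by auto
  define ER where "ER = (\<integral>x. \<bar>R i x\<bar> \<partial>M)"
  define L where "L = 2 * K * ER / e + 1"
  have "0 \<le> ER"
    by (simp add: ER_def)
  then have L: "0 < L"
    using K(1) \<open>0 < e\<close> by (simp add: L_def add_nonneg_pos)
  have "K * ER \<le> L * (e / 2)"
    using \<open>0 < e\<close> by (simp add: L_def field_simps)
  then have "K / L * ER \<le> e / 2"
    using L by (simp add: field_simps)
  then have "e / 2 + K / L * ER \<le> e"
    by linarith
  then have bound: "ennreal (e / 2) + ennreal (K / L * ER) \<le> ennreal e"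
    using \<open>0 < e\<close> K(1) L \<open>0 \<le> ER\<close> by (simp add: ennreal_leI flip: ennreal_plus)
  have "(\<integral>\<^sup>+x. ennreal (\<bar>R i x\<bar> * indicator {y. L < \<bar>R i y\<bar>} x * \<bar>Z x\<bar>) \<partial>M) \<le> ennreal e"
    if Z: "Z \<in> Q" for Z
  proof -
    have "(\<lambda>x. R i x * Z x) \<in> {(\<lambda>x. R i x * Z x) | Z. Z \<in> Q}"
      using Z by blast
    from K(2)[OF this] have "(\<integral>\<^sup>+x. ennreal \<bar>R i x * Z x\<bar> * indicator {y. K < \<bar>R i y * Z y\<bar>} x \<partial>M)
        + ennreal (K / L * ER) \<le> ennreal (e / 2) + ennreal (K / L * ER)"
      by (intro add_right_mono less_imp_le)
    with nn_integral_product_tail_le[OF measurable_R borel_measurable_integrable[OF Q_integrable[OF Z]]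
        integrable_R K(1) L] bound
    show ?thesis
      unfolding ER_def by (meson order_trans)
  qed
  with L show thesis
    by (rule that)
qed

lemma integrable_R_mult_L1_limit:
  assumes Zs: "\<And>n. Zs n \<in> Q" and Z: "integrable M Z"
    and lim: "(\<lambda>n. \<integral>x. \<bar>Zs n x - Z x\<bar> \<partial>M) \<longlonglongrightarrow> 0"
  shows "integrable M (\<lambda>x. R i x * Z x)"
proof -
  obtain B where B: "\<And>Z. Z \<in> Q \<Longrightarrow> integrable M (\<lambda>x. R i x * Z x)"
    "\<And>Z. Z \<in> Q \<Longrightarrow> (\<integral>x. \<bar>R i x * Z x\<bar> \<partial>M) \<le> B"
    using R_mult_Q_L1_bounded by blast
  have "(\<integral>\<^sup>+x. ennreal (\<bar>R i x\<bar> * \<bar>Z x\<bar>) \<partial>M) \<le> ennreal B"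
  proof (rule nn_integral_L1_limit_le[OF Q_integrable[OF Zs] Z lim])
    fix n
    show "(\<integral>\<^sup>+x. ennreal (\<bar>R i x\<bar> * \<bar>Zs n x\<bar>) \<partial>M) \<le> ennreal B"
      using integrable_abs[OF B(1)[OF Zs[of n]]] B(2)[OF Zs[of n]]
      by (simp add: abs_mult nn_integral_eq_integral ennreal_leI)
  qed measurable
  then show ?thesis
    using Z by (intro integrableI_bounded) (auto simp: abs_mult top.not_eq_extremum intro: le_less_trans)
qed

lemma tendsto_integral_R_mult_L1_limit:
  assumes Zs: "\<And>n. Zs n \<in> Q" and Z: "integrable M Z"
    and lim: "(\<lambda>n. \<integral>x. \<bar>Zs n x - Z x\<bar> \<partial>M) \<longlonglongrightarrow> 0"
  shows "(\<lambda>n. \<integral>x. R i x * Zs n x \<partial>M) \<longlonglongrightarrow> (\<integral>x. R i x * Z x \<partial>M)"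
proof (rule LIMSEQ_I)
  fix e :: real
  assume "0 < e"
  then obtain L where L: "0 < L" and tail: "\<And>Z. Z \<in> Q \<Longrightarrow>
      (\<integral>\<^sup>+x. ennreal (\<bar>R i x\<bar> * indicator {y. L < \<bar>R i y\<bar>} x * \<bar>Z x\<bar>) \<partial>M) \<le> ennreal (e / 4)"
    using R_tail_uniform[of "e / 4" i] by auto
  define V where "V x = \<bar>R i x\<bar> * indicator {y. L < \<bar>R i y\<bar>} x" for x
  have [measurable]: "V \<in> borel_measurable M"
    unfolding V_def by measurable
  have int_RZ: "integrable M (\<lambda>x. R i x * Z x)"
    by (rule integrable_R_mult_L1_limit[OF Zs Z lim])
  have int_V: "integrable M (\<lambda>x. V x * \<bar>Y x\<bar>)" if "integrable M (\<lambda>x. R i x * Y x)" "integrable M Y" for Y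
    using that by (intro Bochner_Integration.integrable_bound[OF that(1)]) (auto simp: V_def indicator_def abs_mult)
  have tail_Zs: "(\<integral>x. V x * \<bar>Zs n x\<bar> \<partial>M) \<le> e / 4" for n
    using tail[OF Zs[of n]] int_V[OF R_mult_Q_integrable Q_integrable, OF Zs Zs] \<open>0 < e\<close>
    by (intro integral_le_of_nn_integral_le) (auto simp: V_def)
  have tail_Z: "(\<integral>x. V x * \<bar>Z x\<bar> \<partial>M) \<le> e / 4"
  proof (rule integral_le_of_nn_integral_le)
    show "(\<integral>\<^sup>+x. ennreal (V x * \<bar>Z x\<bar>) \<partial>M) \<le> ennreal (e / 4)"
      using tail[OF Zs] by (intro nn_integral_L1_limit_le[OF Q_integrable[OF Zs] Z lim]) (auto simp: V_def)
  qed (use int_V[OF int_RZ Z] \<open>0 < e\<close> in \<open>auto simp: V_def\<close>)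
  obtain N where N: "\<And>n. N \<le> n \<Longrightarrow> (\<integral>x. \<bar>Zs n x - Z x\<bar> \<partial>M) < e / (4 * L)"
    using LIMSEQ_D[OF lim, of "e / (4 * L)"] \<open>0 < e\<close> L by auto
  have "\<bar>(\<integral>x. R i x * Zs n x \<partial>M) - (\<integral>x. R i x * Z x \<partial>M)\<bar> < e" if "N \<le> n" for n
  proof -
    have "\<bar>(\<integral>x. R i x * Zs n x \<partial>M) - (\<integral>x. R i x * Z x \<partial>M)\<bar>
        \<le> L * (\<integral>x. \<bar>Zs n x - Z x\<bar> \<partial>M) + (\<integral>x. V x * \<bar>Zs n x\<bar> \<partial>M) + (\<integral>x. V x * \<bar>Z x\<bar> \<partial>M)"
      unfolding V_def using L Z Q_integrable[OF Zs] R_mult_Q_integrable[OF Zs] int_RZ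
      by (intro integral_mult_diff_le_truncated) auto
    moreover have "L * (\<integral>x. \<bar>Zs n x - Z x\<bar> \<partial>M) < e / 4"
      using N[OF that] L by (simp add: field_simps)
    ultimately show ?thesis
      using tail_Zs[of n] tail_Z by linarith
  qed
  then show "\<exists>N. \<forall>n\<ge>N. norm ((\<integral>x. R i x * Zs n x \<partial>M) - (\<integral>x. R i x * Z x \<partial>M)) < e"
    by auto
qed

definition C_point :: "('a \<Rightarrow> real) \<Rightarrow> real^'d" where
  "C_point Z = (\<chi> i. - (\<integral>x. Z x * (R i x - r) \<partial>M))"

lemma
  assumes "integrable M Z" "integrable M (\<lambda>x. R i x * Z x)"
  shows integrable_mult_excess: "integrable M (\<lambda>x. Z x * (R i x - r))"
    and C_point_nth: "C_point Z $ i = r * (\<integral>x. Z x \<partial>M) - (\<integral>x. R i x * Z x \<partial>M)"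
proof -
  have eq: "(\<lambda>x. Z x * (R i x - r)) = (\<lambda>x. R i x * Z x - r * Z x)"
    by (auto simp: algebra_simps)
  show "integrable M (\<lambda>x. Z x * (R i x - r))"
    unfolding eq using assms by auto
  show "C_point Z $ i = r * (\<integral>x. Z x \<partial>M) - (\<integral>x. R i x * Z x \<partial>M)"
    using assms by (simp add: C_point_def eq)
qed

lemma C_point_tendsto:
  assumes Zs: "\<And>n. Zs n \<in> Q" and Z: "integrable M Z"
    and lim: "(\<lambda>n. \<integral>x. \<bar>Zs n x - Z x\<bar> \<partial>M) \<longlonglongrightarrow> 0"
  shows "(\<lambda>n. C_point (Zs n)) \<longlonglongrightarrow> C_point Z"
proof (rule vec_tendstoI)
  fix i
  have "(\<lambda>n. \<integral>x. Zs n x \<partial>M) \<longlonglongrightarrow> (\<integral>x. Z x \<partial>M)"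
    using Q_integrable[OF Zs] Z lim nn_integral_abs_diff_tendsto_0_iff[of M Zs Z]
    by (intro tendsto_L1_int) auto
  then have "(\<lambda>n. r * (\<integral>x. Zs n x \<partial>M) - (\<integral>x. R i x * Zs n x \<partial>M))
      \<longlonglongrightarrow> r * (\<integral>x. Z x \<partial>M) - (\<integral>x. R i x * Z x \<partial>M)"
    by (intro tendsto_intros tendsto_integral_R_mult_L1_limit[OF Zs Z lim])
  then show "(\<lambda>n. C_point (Zs n) $ i) \<longlonglongrightarrow> C_point Z $ i"
    using Q_integrable[OF Zs] R_mult_Q_integrable[OF Zs] Z integrable_R_mult_L1_limit[OF Zs Z lim]
    by (simp add: C_point_nth)
qed

lemma C_point_convex_combination:
  assumes "Z1 \<in> Q" "Z2 \<in> Q"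
  shows "C_point (\<lambda>x. t * Z1 x + (1 - t) * Z2 x) = t *\<^sub>R C_point Z1 + (1 - t) *\<^sub>R C_point Z2"
proof -
  have "(\<integral>x. (t * Z1 x + (1 - t) * Z2 x) * (R i x - r) \<partial>M)
      = t * (\<integral>x. Z1 x * (R i x - r) \<partial>M) + (1 - t) * (\<integral>x. Z2 x * (R i x - r) \<partial>M)" for i
  proof -
    have "(\<lambda>x. (t * Z1 x + (1 - t) * Z2 x) * (R i x - r)) =
        (\<lambda>x. t * (Z1 x * (R i x - r)) + (1 - t) * (Z2 x * (R i x - r)))"
      by (auto simp: algebra_simps)
    then show ?thesis
      using assms by (simp add: integrable_mult_excess Q_integrable R_mult_Q_integrable)
  qed
  then show ?thesis
    by (simp add: C_point_def vec_eq_iff algebra_simps)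
qed

lemma convex_C_point_image: "convex (C_point ` Q)"
proof (rule convexI)
  fix a b and u v :: real
  assume "a \<in> C_point ` Q" "b \<in> C_point ` Q" "0 \<le> u" "0 \<le> v" "u + v = 1"
  then obtain Z1 Z2 where Z: "Z1 \<in> Q" "Z2 \<in> Q" "a = C_point Z1" "b = C_point Z2"
    by auto
  have "u *\<^sub>R a + v *\<^sub>R b = C_point (\<lambda>x. u * Z1 x + (1 - u) * Z2 x)"
    using Z \<open>u + v = 1\<close> by (simp add: C_point_convex_combination eq_diff_eq')
  moreover have "(\<lambda>x. u * Z1 x + (1 - u) * Z2 x) \<in> Q"
    using Z \<open>0 \<le> u\<close> \<open>0 \<le> v\<close> \<open>u + v = 1\<close> by (intro Q_convex) auto
  ultimately show "u *\<^sub>R a + v *\<^sub>R b \<in> C_point ` Q"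
    by blast
qed

lemma bounded_C_point_image: "bounded (C_point ` Q)"
proof -
  have "\<exists>B. \<forall>Z\<in>Q. (\<integral>x. \<bar>R i x * Z x\<bar> \<partial>M) \<le> B" for i
    using R_mult_Q_L1_bounded by metis
  then obtain B where B: "\<And>i Z. Z \<in> Q \<Longrightarrow> (\<integral>x. \<bar>R i x * Z x\<bar> \<partial>M) \<le> B i"
    by metis
  have "norm (C_point Z) \<le> (\<Sum>i\<in>UNIV. \<bar>r\<bar> + B i)" if Z: "Z \<in> Q" for Z
  proof -
    have nth_bound: "\<bar>C_point Z $ i\<bar> \<le> \<bar>r\<bar> + B i" for i
    proof -
      have "\<bar>C_point Z $ i\<bar> \<le> \<bar>r\<bar> + \<bar>\<integral>x. R i x * Z x \<partial>M\<bar>"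
        using Z by (simp add: C_point_nth Q_integrable R_mult_Q_integrable Q_integral)
      also have "\<dots> \<le> \<bar>r\<bar> + B i"
        using order_trans[OF integral_abs_bound B[OF Z, of i]] by simp
      finally show ?thesis .
    qed
    have "norm (C_point Z) \<le> (\<Sum>i\<in>UNIV. \<bar>C_point Z $ i\<bar>)"
      by (rule norm_le_l1_cart)
    also have "\<dots> \<le> (\<Sum>i\<in>UNIV. \<bar>r\<bar> + B i)"
      by (rule sum_mono) (rule nth_bound)
    finally show ?thesis .
  qed
  then show ?thesis
    unfolding bounded_iff by blast
qed

lemma L1_closure_memD:
  assumes "Z \<in> L1_closure M Q"
  shows "integrable M Z" "AE x in M. 0 \<le> Z x" "integrable M (\<lambda>x. R i x * Z x)"
proof -
  obtain Zs where "\<And>n. Zs n \<in> Q" "integrable M Z" "(\<lambda>n. \<integral>x. \<bar>Zs n x - Z x\<bar> \<partial>M) \<longlonglongrightarrow> 0"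
    using assms mem_L1_closure_iff[of Q M Z] Q_integrable by blast
  then show "integrable M Z" "integrable M (\<lambda>x. R i x * Z x)"
    using integrable_R_mult_L1_limit by blast+
  show "AE x in M. 0 \<le> Z x"
    using L1_closure_nonneg[OF Q_densities assms] .
qed

lemma C_set_L1_closure: "C_set M R r (L1_closure M Q) = C_point ` L1_closure M Q"
proof -
  have neg_expect_eq: "neg_expect M Z (\<lambda>x. R i x - r) = ereal (C_point Z $ i)"
    if "Z \<in> L1_closure M Q" for Z i
    using L1_closure_memD[OF that]
    by (subst neg_expect_eq_integral) (auto simp: C_point_def integrable_mult_excess)
  show ?thesis
  proof (intro set_eqI iffI)
    fix c
    assume "c \<in> C_set M R r (L1_closure M Q)"
    then obtain Z where Z: "Z \<in> L1_closure M Q" "\<forall>i. ereal (c $ i) = neg_expect M Z (\<lambda>x. R i x - r)"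
      unfolding C_set_def by blast
    then have "c = C_point Z"
      by (simp add: vec_eq_iff neg_expect_eq)
    with Z(1) show "c \<in> C_point ` L1_closure M Q"
      by blast
  next
    fix c
    assume "c \<in> C_point ` L1_closure M Q"
    then show "c \<in> C_set M R r (L1_closure M Q)"
      unfolding C_set_def using neg_expect_eq by auto
  qed
qed

lemma C_point_L1_closure_subset: "C_point ` L1_closure M Q \<subseteq> closure (C_point ` Q)"
proof
  fix c
  assume "c \<in> C_point ` L1_closure M Q"
  then obtain Z Zs where "c = C_point Z" "\<And>n. Zs n \<in> Q" "integrable M Z"
    "(\<lambda>n. \<integral>x. \<bar>Zs n x - Z x\<bar> \<partial>M) \<longlonglongrightarrow> 0"
    using mem_L1_closure_iff[of Q M] Q_integrable by blast
  then have "(\<lambda>n. C_point (Zs n)) \<longlonglongrightarrow> c" "\<forall>n. C_point (Zs n) \<in> C_point ` Q"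
    using C_point_tendsto by auto
  then show "c \<in> closure (C_point ` Q)"
    unfolding closure_sequential by (intro exI[of _ "\<lambda>n. C_point (Zs n)"]) simp
qed

lemma Q_midpoint:
  assumes "Z \<in> Q" "Z' \<in> Q"
  shows "(\<lambda>x. (Z x + Z' x) / 2) \<in> Q"
    and "dist (C_point (\<lambda>x. (Z x + Z' x) / 2)) c \<le> dist (C_point Z) c / 2 + dist (C_point Z') c / 2"
proof -
  have W: "(\<lambda>x. (Z x + Z' x) / 2) = (\<lambda>x. 1 / 2 * Z x + (1 - 1 / 2) * Z' x)"
    by (auto simp: field_simps)
  show "(\<lambda>x. (Z x + Z' x) / 2) \<in> Q"
    unfolding W using Q_convex[OF assms, of "1 / 2"] by simp
  have "C_point (\<lambda>x. (Z x + Z' x) / 2) - c = (1 / 2) *\<^sub>R (C_point Z - c) + (1 / 2) *\<^sub>R (C_point Z' - c)"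
    unfolding W C_point_convex_combination[OF assms] by (simp add: vec_eq_iff field_simps)
  then show "dist (C_point (\<lambda>x. (Z x + Z' x) / 2)) c \<le> dist (C_point Z) c / 2 + dist (C_point Z') c / 2"
    using norm_triangle_ineq[of "(1 / 2) *\<^sub>R (C_point Z - c)" "(1 / 2) *\<^sub>R (C_point Z' - c)"]
    by (simp add: dist_norm)
qed

lemma closure_C_point_image_L1_Cauchy:
  assumes c: "c \<in> closure (C_point ` Q)"
  obtains Zs where "\<And>n. Zs n \<in> Q" "\<And>n. dist (C_point (Zs n)) c \<le> 1 / Suc n"
    "\<forall>\<epsilon>>0. \<exists>N. \<forall>n\<ge>N. \<forall>m\<ge>N. (\<integral>x. \<bar>Zs n x - Zs m x\<bar> \<partial>M) < \<epsilon>"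
proof -
  define A where "A n = {Z \<in> Q. dist (C_point Z) c \<le> 1 / Suc n}" for n
  have nonempty: "A n \<noteq> {}" for n
  proof -
    have "0 < 1 / real (Suc n)"
      by simp
    then obtain y where "y \<in> C_point ` Q" "dist y c < 1 / Suc n"
      using c unfolding closure_approachable by blast
    then show ?thesis
      unfolding A_def by force
  qed
  have densities: "A n \<subseteq> densities M" for n
    using Q_densities by (auto simp: A_def)
  have "decseq A"
  proof (rule decseq_SucI)
    fix n
    have "1 / Suc (Suc n) \<le> 1 / Suc n"
      using frac_le[of 1 1 "Suc n" "Suc (Suc n)"] by simp
    then show "A (Suc n) \<subseteq> A n"
      unfolding A_def by auto
  qed
  have midpoint: "\<forall>n m. n \<le> m \<longrightarrow> (\<forall>Z\<in>A n. \<forall>Z'\<in>A m. (\<lambda>x. (Z x + Z' x) / 2) \<in> A n)"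
  proof (intro allI impI ballI)
    fix n m Z Z'
    assume "n \<le> m" "Z \<in> A n" "Z' \<in> A m"
    then have "Z \<in> Q" "Z' \<in> Q" "dist (C_point Z) c \<le> 1 / Suc n" "dist (C_point Z') c \<le> 1 / Suc m"
      by (auto simp: A_def)
    with Q_midpoint(1)[of Z Z'] Q_midpoint(2)[of Z Z' c] \<open>n \<le> m\<close> frac_le[of 1 1 "Suc n" "Suc m"]
    show "(\<lambda>x. (Z x + Z' x) / 2) \<in> A n"
      unfolding A_def by simp
  qed
  obtain Zs where A: "\<And>n. Zs n \<in> A n"
    and defect: "\<forall>\<delta>>0. \<exists>N. \<forall>n\<ge>N. \<forall>m\<ge>N.
      (\<integral>x. sqrt ((Zs n x + Zs m x) / 2) - (sqrt (Zs n x) + sqrt (Zs m x)) / 2 \<partial>M) < \<delta>"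
    using sqrt_midpoint_defect_vanishing_sequence[OF nonempty densities \<open>decseq A\<close> midpoint] by blast
  have Zs: "\<And>n. Zs n \<in> Q"
    using A by (auto simp: A_def)
  have "\<forall>e>0. \<exists>a\<ge>0. \<forall>n. (\<integral>x. max 0 (Zs n x - a) \<partial>M) \<le> e"
    using unif_integrable_pos_part_tail[OF UI_Q] Zs by metis
  with Q_integrable[OF Zs] Q_nonneg[OF Zs] have
    "\<forall>\<epsilon>>0. \<exists>N. \<forall>n\<ge>N. \<forall>m\<ge>N. (\<integral>x. \<bar>Zs n x - Zs m x\<bar> \<partial>M) < \<epsilon>"
    using defect by (rule L1_Cauchy_of_sqrt_midpoint_defect)
  with Zs A show thesis
    unfolding A_def by (intro that) auto
qed

lemma closure_C_point_image_subset: "closure (C_point ` Q) \<subseteq> C_point ` L1_closure M Q"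
proof
  fix c
  assume "c \<in> closure (C_point ` Q)"
  then obtain Zs where Zs: "\<And>n. Zs n \<in> Q" and dist: "\<And>n. dist (C_point (Zs n)) c \<le> 1 / Suc n"
    and "\<forall>\<epsilon>>0. \<exists>N. \<forall>n\<ge>N. \<forall>m\<ge>N. (\<integral>x. \<bar>Zs n x - Zs m x\<bar> \<partial>M) < \<epsilon>"
    using closure_C_point_image_L1_Cauchy by blast
  then obtain Z where Z: "integrable M Z" and lim: "(\<lambda>n. \<integral>x. \<bar>Zs n x - Z x\<bar> \<partial>M) \<longlonglongrightarrow> 0"
    using L1_Cauchy_imp_convergent[of M Zs] Q_integrable[OF Zs] by blast
  have "(\<lambda>n. dist (C_point (Zs n)) c) \<longlonglongrightarrow> 0"
  proof (rule tendsto_sandwich[OF _ _ tendsto_const])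
    show "(\<lambda>n. 1 / Suc n) \<longlonglongrightarrow> 0"
      using LIMSEQ_inverse_real_of_nat by (simp add: inverse_eq_divide)
  qed (use dist in auto)
  then have "(\<lambda>n. C_point (Zs n)) \<longlonglongrightarrow> c"
    by (rule tendsto_dist_iff[THEN iffD2])
  with C_point_tendsto[OF Zs Z lim] have "C_point Z = c"
    by (rule LIMSEQ_unique)
  moreover have "Z \<in> L1_closure M Q"
    using mem_L1_closure_iff[of Q M Z] Q_integrable Z Zs lim by blast
  ultimately show "c \<in> C_point ` L1_closure M Q"
    by blast
qed

lemma rho_excess_return: "rho M Q (excess_return R r \<pi>) = (\<Squnion>Z\<in>Q. ereal (\<pi> \<bullet> C_point Z))"
proof -
  have "neg_expect M Z (excess_return R r \<pi>) = ereal (\<pi> \<bullet> C_point Z)" if Z: "Z \<in> Q" for Z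
  proof -
    have int: "integrable M (\<lambda>x. Z x * (R i x - r))" for i
      using Z by (simp add: integrable_mult_excess Q_integrable R_mult_Q_integrable)
    have eq: "(\<lambda>x. Z x * excess_return R r \<pi> x) = (\<lambda>x. \<Sum>i\<in>UNIV. \<pi> $ i * (Z x * (R i x - r)))"
      by (auto simp: excess_return_def sum_distrib_left algebra_simps)
    have [measurable]: "excess_return R r \<pi> \<in> borel_measurable M"
      unfolding excess_return_def by measurable
    have "integrable M (\<lambda>x. Z x * excess_return R r \<pi> x)"
      unfolding eq using int by auto
    then have "neg_expect M Z (excess_return R r \<pi>) = ereal (- (\<integral>x. Z x * excess_return R r \<pi> x \<partial>M))"
      using Q_integrable[OF Z] Q_nonneg[OF Z] by (intro neg_expect_eq_integral) auto
    also have "\<dots> = ereal (\<pi> \<bullet> C_point Z)"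
      using int by (simp add: eq C_point_def inner_vec_def sum_negf)
    finally show ?thesis .
  qed
  then show ?thesis
    unfolding rho_def by (intro SUP_cong) auto
qed

lemma compact_closure_C_point_image: "compact (closure (C_point ` Q))"
  using bounded_C_point_image by (simp add: compact_closure)

lemma rho_excess_return_attained:
  "\<forall>\<pi>. \<exists>c\<in>closure (C_point ` Q). (\<forall>c'\<in>closure (C_point ` Q). \<pi> \<bullet> c' \<le> \<pi> \<bullet> c) \<and>
    rho M Q (excess_return R r \<pi>) = ereal (\<pi> \<bullet> c)"
proof
  fix \<pi> :: "real^'d"
  have "C_point ` Q \<noteq> {}"
    using one_in_Q by blast
  then obtain c where "c \<in> closure (C_point ` Q)"
    "\<And>c'. c' \<in> closure (C_point ` Q) \<Longrightarrow> \<pi> \<bullet> c' \<le> \<pi> \<bullet> c"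
    "(\<Squnion>y\<in>C_point ` Q. ereal (\<pi> \<bullet> y)) = ereal (\<pi> \<bullet> c)"
    using SUP_inner_attained_on_closure[OF compact_closure_C_point_image] by blast
  then show "\<exists>c\<in>closure (C_point ` Q). (\<forall>c'\<in>closure (C_point ` Q). \<pi> \<bullet> c' \<le> \<pi> \<bullet> c) \<and>
      rho M Q (excess_return R r \<pi>) = ereal (\<pi> \<bullet> c)"
    by (auto simp: rho_excess_return image_image)
qed

end

theorem proposition4p5:
  fixes M :: "'a measure" and r :: real
    and S0 :: "real^'d" and S1 :: "'d \<Rightarrow> 'a \<Rightarrow> real"
    and R :: "'d \<Rightarrow> 'a \<Rightarrow> real" and Q :: "('a \<Rightarrow> real) set"
  assumes "prob_space M"
    and "r > -1"
    and "\<forall>i. S0 $ i > 0"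
    and "\<forall>i. S1 i \<in> borel_measurable M"
    and R_def: "\<forall>i x. R i x = (S1 i x - S0 $ i) / S0 $ i"
    and nonredundant: "\<forall>(\<theta>0::real) (\<theta>::real^'d).
          (\<theta>0 + (\<Sum>i\<in>UNIV. \<theta> $ i * S0 $ i) = 0 \<and>
           (AE x in M. \<theta>0 * (1 + r) + (\<Sum>i\<in>UNIV. \<theta> $ i * S1 i x) = 0))
          \<longrightarrow> \<theta>0 = 0 \<and> \<theta> = 0"
    and "\<forall>i. integrable M (R i)"
    and "\<exists>i. integral\<^sup>L M (R i) \<noteq> r"
    and "Q \<subseteq> densities M"
    and "\<forall>Z1\<in>Q. \<forall>Z2\<in>Q. \<forall>t::real. 0 \<le> t \<and> t \<le> 1 \<longrightarrow>
           (\<lambda>x. t * Z1 x + (1 - t) * Z2 x) \<in> Q"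
    and "(\<lambda>_. 1) \<in> Q"
    and UI: "unif_integrable M Q"
    and UI_R: "\<forall>i. unif_integrable M {(\<lambda>x. R i x * Z x) | Z. Z \<in> Q}"
  shows "convex (C_set M R r (L1_closure M Q)) \<and> compact (C_set M R r (L1_closure M Q)) \<and>
         (\<forall>\<pi>::real^'d. \<exists>c\<in>C_set M R r (L1_closure M Q).
             (\<forall>c'\<in>C_set M R r (L1_closure M Q). \<pi> \<bullet> c' \<le> \<pi> \<bullet> c) \<and>
             rho M Q (excess_return R r \<pi>) = ereal (\<pi> \<bullet> c))"
proof -
  interpret condition_UI M R r Q
    using assms(1,7,9-13) by (intro condition_UI.intro condition_UI_axioms.intro) blast+
  have "C_set M R r (L1_closure M Q) = closure (C_point ` Q)"
    unfolding C_set_L1_closure using C_point_L1_closure_subset closure_C_point_image_subset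
    by (rule equalityI)
  then show ?thesis
    using convex_closure[OF convex_C_point_image] compact_closure_C_point_image rho_excess_return_attained
    by simp
qed

end
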